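(* Let $A\in\mathbb C^{n\times n}$, $b\in\mathbb C^n$, and let $M, F\in\mathbb C^{n\times n}$ be nonsingular. Partition the index set $\{1,\dots,n\}$ into $m$ consecutive blocks, and write accordingly $x = (x^{(1)},\dots,x^{(m)})$, $b=(b^{(1)},\dots,b^{(m)})$, and $A = (A^{(s,q)})_{s,q=1}^m$ in block form; assume $M$ and $F$ are block diagonal with respect to this partition, with nonsingular diagonal blocks $M^{(1)},\dots,M^{(m)}$ and $F^{(1)},\dots,F^{(m)}$. Let $I$ be the $n\times n$ identity and \[ Q := \begin{bmatrix} 0 & I - M^{-1}A \\ I - F^{-1}A & 0 \end{bmatrix}. \] Consider any sequence of subsets $\Omega_k\subseteq\{1,\dots,m\}$, $k\in\mathbb N$, such that each $s\in\{1,\dots,m\}$ belongs to $\Omega_k$ for infinitely many $k$, and any functions $\delta_s(q,k)\in\mathbb N$ ($s,q\in\{1,\dots,m\}$, $k\in\mathbb N$) with $\delta_s(q,k)\le k$ and $\lim_{k\to\infty}\delta_s(q,k)=\infty$ for all $s,q$. Given an arbitrary initial vector $x^0$, define the asynchronous alternating iteration: for each $k\in\mathbb N$ and all $s\in\{1,\dots,m\}$, \[ y^{(s),k} := x^{(s),\delta_s(s,k)} + {M^{(s)}}^{-1}\Big(b^{(s)} - \sum_{q=1}^m A^{(s,q)} x^{(q),\delta_s(q,k)}\Big), \] \[ x^{(s),k+1} := \begin{cases} y^{(s),\delta_s(s,k)} + {F^{(s)}}^{-1}\Big(b^{(s)} - \displaystyle\sum_{q=1}^m A^{(s,q)} y^{(q),\delta_s(q,k)}\Big)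 & \text{if } s\in\Omega_k,\\[1ex] x^{(s),k} & \text{if } s\notin\Omega_k.\end{cases} \] If $\rho(|Q|)<1$, then for every initial guess $x^0$, every such sequence $\{\Omega_k\}$ and every such delay functions $\delta_1,\dots,\delta_m$, the sequence $x^k$ converges to the solution of $Ax=b$.
   Context: For a matrix $\mathcal A$, $|\mathcal A|$ denotes the entrywise absolute value (modulus) and $\rho(\mathcal A)$ denotes its spectral radius. *)

theory Defs
  imports "Jordan_Normal_Form.Spectral_Radius" "Jordan_Normal_Form.Gauss_Jordan_Elimination"
begin

text \<open>Consecutive block partition of the indices {0..<n} into m blocks, given by cut
points p 0 = 0 < p 1 < ... < p m = n; block s (for s < m) is {p s ..< p (Suc s)}.\<close>

definition consecutive_partition :: "nat \<Rightarrow> nat \<Rightarrow> (nat \<Rightarrow> nat) \<Rightarrow> bool" where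
  "consecutive_partition n m p \<longleftrightarrow> p 0 = 0 \<and> p m = n \<and> (\<forall>s<m. p s < p (Suc s))"

definition block_of :: "(nat \<Rightarrow> nat) \<Rightarrow> nat \<Rightarrow> nat \<Rightarrow> nat" where
  "block_of p m i = (THE s. s < m \<and> p s \<le> i \<and> i < p (Suc s))"

definition block_size :: "(nat \<Rightarrow> nat) \<Rightarrow> nat \<Rightarrow> nat" where
  "block_size p s = p (Suc s) - p s"

definition mblock :: "'a mat \<Rightarrow> (nat \<Rightarrow> nat) \<Rightarrow> nat \<Rightarrow> nat \<Rightarrow> 'a mat" where
  "mblock A p s q = mat (block_size p s) (block_size p q) (\<lambda>(i,j). A $$ (p s + i, p q + j))"

definition vblock :: "'a vec \<Rightarrow> (nat \<Rightarrow> nat) \<Rightarrow> nat \<Rightarrow> 'a vec" where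
  "vblock v p s = vec (block_size p s) (\<lambda>i. v $ (p s + i))"

definition block_diagonal :: "'a::zero mat \<Rightarrow> (nat \<Rightarrow> nat) \<Rightarrow> nat \<Rightarrow> bool" where
  "block_diagonal M p m \<longleftrightarrow>
     (\<forall>i<dim_row M. \<forall>j<dim_col M. block_of p m i \<noteq> block_of p m j \<longrightarrow> M $$ (i,j) = 0)"

definition mat_inv :: "'a::field mat \<Rightarrow> 'a mat" where
  "mat_inv B = (SOME C. C \<in> carrier_mat (dim_row B) (dim_row B) \<and>
                        B * C = 1\<^sub>m (dim_row B) \<and> C * B = 1\<^sub>m (dim_row B))"

definition abs_mat :: "complex mat \<Rightarrow> complex mat" where
  "abs_mat A = map_mat (\<lambda>z. complex_of_real (cmod z)) A"

definition block_row_sum ::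
  "complex mat \<Rightarrow> (nat \<Rightarrow> nat) \<Rightarrow> nat \<Rightarrow> nat \<Rightarrow> (nat \<Rightarrow> complex vec) \<Rightarrow> complex vec" where
  "block_row_sum A p m s z =
     vec (block_size p s) (\<lambda>i. \<Sum>q<m. (mblock A p s q *\<^sub>v z q) $ i)"

end

theory Submission
  imports Defs
begin

text \<open>Let e and f be the errors of the iterates x and y with respect to the solution. Because
M and F are block diagonal, each block update is the corresponding block of one global splitting
step z + M^-1 (b - A z), applied to a vector z assembled from delayed iterates. Hence entrywise
|f| \<le> |I - M^-1 A| |e| (at delayed times) and, on updated blocks, |e| \<le> |I - F^-1 A| |f|.
The powers of the nonnegative matrix |Q| tend to zero, and a truncated Neumann series of |Q|
provides positive weights u, v and \<gamma> < 1 with |I - M^-1 A| v \<le> \<gamma> u and |I - F^-1 A| u \<le> \<gamma> v.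
In the weighted maximum norm the errors never grow, and once all delays exceed a threshold and
every block has been updated again the bound has shrunk by \<gamma>^2. A vector in the kernel of A is a
stationary error sequence, so the same estimate shows that A is nonsingular.\<close>

lemma norm_sum_mult_le_weighted:
  fixes a z :: "nat \<Rightarrow> 'a::real_normed_div_algebra"
  assumes z: "\<And>j. j < N \<Longrightarrow> norm (z j) \<le> c * w j" and c: "0 \<le> c"
    and a: "(\<Sum>j<N. norm (a j) * w j) \<le> \<gamma> * w'"
  shows "norm (\<Sum>j<N. a j * z j) \<le> \<gamma> * c * w'"
proof -
  have "norm (\<Sum>j<N. a j * z j) \<le> (\<Sum>j<N. norm (a j) * (c * w j))"
    by (rule order.trans[OF norm_sum sum_mono]) (simp add: norm_mult mult_left_mono z)
  also have "\<dots> = c * (\<Sum>j<N. norm (a j) * w j)"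
    by (simp add: sum_distrib_left ac_simps)
  also have "\<dots> \<le> c * (\<gamma> * w')"
    using a c by (rule mult_left_mono)
  finally show ?thesis by (simp add: ac_simps)
qed

lemma eventually_all_less:
  fixes n :: nat
  assumes "\<And>i. i < n \<Longrightarrow> eventually (P i) F"
  shows "eventually (\<lambda>x. \<forall>i<n. P i x) F"
proof -
  have "eventually (\<lambda>x. \<forall>i\<in>{..<n}. P i x) F"
    using assms by (intro eventually_ball_finite) auto
  then show ?thesis by (simp add: Ball_def)
qed

lemma sum_lessThan_add:
  fixes g :: "nat \<Rightarrow> 'a :: comm_monoid_add"
  shows "(\<Sum>j<a + b. g j) = (\<Sum>j<a. g j) + (\<Sum>j<b. g (a + j))"
  by (induction b) (simp_all add: add.assoc)

lemma mult_mat_vec_smult_mat: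
  "v \<in> carrier_vec (dim_col A) \<Longrightarrow> (c \<cdot>\<^sub>m A) *\<^sub>v v = c \<cdot>\<^sub>v (A *\<^sub>v (v :: 'a :: comm_ring_1 vec))"
  by (rule eq_vecI) (auto simp: scalar_prod_def sum_distrib_left ac_simps)

lemma spectral_radius_smult_le:
  assumes A: "A \<in> carrier_mat N N" and N: "0 < N" and c: "c \<noteq> 0"
  shows "spectral_radius (c \<cdot>\<^sub>m A) \<le> cmod c * spectral_radius A"
proof -
  have cA: "c \<cdot>\<^sub>m A \<in> carrier_mat N N" using A by simp
  obtain ev where ev: "ev \<in> spectrum (c \<cdot>\<^sub>m A)" and rad: "spectral_radius (c \<cdot>\<^sub>m A) = cmod ev"
    using spectral_radius_mem_max(1)[OF cA N] by auto
  then obtain w where "eigenvector (c \<cdot>\<^sub>m A) w ev"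
    unfolding spectrum_def eigenvalue_def by auto
  then have w: "w \<in> carrier_vec N" "w \<noteq> 0\<^sub>v N" and eq: "c \<cdot>\<^sub>v (A *\<^sub>v w) = ev \<cdot>\<^sub>v w"
    using A unfolding eigenvector_def by (auto simp: mult_mat_vec_smult_mat)
  have "A *\<^sub>v w = (ev / c) \<cdot>\<^sub>v w"
  proof (rule eq_vecI)
    fix i assume "i < dim_vec ((ev / c) \<cdot>\<^sub>v w)"
    then have "c * (A *\<^sub>v w) $ i = ev * w $ i"
      using arg_cong[OF eq, of "\<lambda>x. x $ i"] A w by simp
    then show "(A *\<^sub>v w) $ i = ((ev / c) \<cdot>\<^sub>v w) $ i"
      using \<open>i < _\<close> c by (simp add: field_simps)
  qed (use A w in simp)
  then have "ev / c \<in> spectrum A"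
    using A w unfolding spectrum_def eigenvalue_def eigenvector_def by auto
  then have "cmod (ev / c) \<le> spectral_radius A"
    by (intro spectral_radius_mem_max(2)[OF A N]) simp
  then show ?thesis
    using rad c by (simp add: norm_divide divide_le_eq mult.commute)
qed

lemma pow_mat_smult:
  fixes c :: "'a :: comm_semiring_1"
  assumes "A \<in> carrier_mat N N"
  shows "(c \<cdot>\<^sub>m A) ^\<^sub>m k = c ^ k \<cdot>\<^sub>m A ^\<^sub>m k"
proof (induction k)
  case 0
  show ?case using assms by (intro eq_matI) auto
next
  case (Suc k)
  then show ?case
    using assms by (intro eq_matI) (auto simp: scalar_prod_def sum_distrib_left ac_simps)
qed

lemma pow_mat_Suc_left:
  assumes "A \<in> carrier_mat N N"
  shows "A ^\<^sub>m Suc k = A * A ^\<^sub>m k"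
proof (induction k)
  case 0
  show ?case using assms by simp
next
  case (Suc k)
  have "A ^\<^sub>m Suc (Suc k) = (A * A ^\<^sub>m k) * A" using Suc by simp
  also have "\<dots> = A * A ^\<^sub>m Suc k"
    using assms by (simp add: assoc_mult_mat[of _ N N _ N _ N])
  finally show ?case .
qed

text \<open>For \<rho>(B) < r < 1 the matrix B / r still has spectral radius below 1, so its powers are
bounded and the entries of B^k decay like r^k.\<close>

lemma pow_mat_entry_tendsto_zero:
  fixes B :: "complex mat"
  assumes B: "B \<in> carrier_mat N N" and rad: "spectral_radius B < 1" and ij: "i < N" "j < N"
  shows "(\<lambda>k. (B ^\<^sub>m k) $$ (i, j)) \<longlonglongrightarrow> 0"
proof -
  have N: "0 < N" using ij by simp
  define r where "r = (spectral_radius B + 1) / 2"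
  have "0 \<le> spectral_radius B"
    using spectral_radius_mem_max(1)[OF B N] by auto
  then have r: "0 < r" "r < 1" "spectral_radius B < r"
    using rad unfolding r_def by auto
  define B' where "B' = complex_of_real (1 / r) \<cdot>\<^sub>m B"
  have B': "B' \<in> carrier_mat N N" using B unfolding B'_def by simp
  have "spectral_radius B' \<le> cmod (complex_of_real (1 / r)) * spectral_radius B"
    unfolding B'_def using r by (intro spectral_radius_smult_le[OF B N]) auto
  also have "\<dots> < 1" using r by (simp add: norm_divide field_simps)
  finally obtain c where c: "\<And>k. norm_bound (B' ^\<^sub>m k) c"
    using spectral_radius_jnf_norm_bound_less_1_upper_triangular[OF B'] by blast
  have bound: "cmod ((B ^\<^sub>m k) $$ (i, j)) \<le> c * r ^ k" for k
  proof -
    have "B' ^\<^sub>m k = complex_of_real (1 / r) ^ k \<cdot>\<^sub>m B ^\<^sub>m k"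
      unfolding B'_def by (rule pow_mat_smult[OF B])
    moreover have "cmod ((B' ^\<^sub>m k) $$ (i, j)) \<le> c"
      using c[of k] B' ij unfolding norm_bound_def by simp
    ultimately have "(1 / r) ^ k * cmod ((B ^\<^sub>m k) $$ (i, j)) \<le> c"
      using B ij r by (simp add: norm_mult norm_power norm_divide)
    then show ?thesis using r by (simp add: field_simps)
  qed
  have "(\<lambda>k. c * r ^ k) \<longlonglongrightarrow> 0"
    using r by (intro tendsto_mult_right_zero LIMSEQ_realpow_zero) simp_all
  then show ?thesis
    by (rule tendsto_0_le[where K = 1]) (simp add: order_trans[OF bound])
qed

lemma pow_mat_nonneg:
  fixes R :: "real mat"
  assumes R: "R \<in> carrier_mat N N" and nonneg: "\<And>i j. i < N \<Longrightarrow> j < N \<Longrightarrow> 0 \<le> R $$ (i, j)"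
  shows "i < N \<Longrightarrow> j < N \<Longrightarrow> 0 \<le> (R ^\<^sub>m k) $$ (i, j)"
proof (induction k arbitrary: j)
  case (Suc k)
  then show ?case
    using R nonneg by (auto simp: scalar_prod_def intro!: sum_nonneg)
qed (use R in auto)

lemma row_sum_pow_mat_Suc:
  assumes R: "R \<in> carrier_mat N N" and i: "i < N"
  shows "(\<Sum>l<N. (R ^\<^sub>m Suc k) $$ (i, l)) = (\<Sum>j<N. R $$ (i, j) * (\<Sum>l<N. (R ^\<^sub>m k) $$ (j, l)))"
proof -
  have "(\<Sum>l<N. (R ^\<^sub>m Suc k) $$ (i, l)) = (\<Sum>l<N. \<Sum>j<N. R $$ (i, j) * (R ^\<^sub>m k) $$ (j, l))"
    unfolding pow_mat_Suc_left[OF R] using R i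
    by (intro sum.cong) (auto simp: scalar_prod_def lessThan_atLeast0)
  also have "\<dots> = (\<Sum>j<N. R $$ (i, j) * (\<Sum>l<N. (R ^\<^sub>m k) $$ (j, l)))"
    by (subst sum.swap) (simp add: sum_distrib_left)
  finally show ?thesis .
qed

text \<open>The vector u = (I + R + ... + R^T) 1, with T chosen such that R^(T+1) 1 < 1/2, satisfies
R u = u - 1 + R^(T+1) 1.\<close>

lemma nonneg_mat_subinvariant_vector:
  fixes R :: "real mat"
  assumes R: "R \<in> carrier_mat N N" and nonneg: "\<And>i j. i < N \<Longrightarrow> j < N \<Longrightarrow> 0 \<le> R $$ (i, j)"
    and pow_zero: "\<And>i j. i < N \<Longrightarrow> j < N \<Longrightarrow> (\<lambda>k. (R ^\<^sub>m k) $$ (i, j)) \<longlonglongrightarrow> 0"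
  obtains u where "\<And>i. i < N \<Longrightarrow> 1 \<le> u i"
    "\<And>i. i < N \<Longrightarrow> (\<Sum>j<N. R $$ (i, j) * u j) \<le> u i - 1 / 2"
proof -
  define f where "f k i = (\<Sum>l<N. (R ^\<^sub>m k) $$ (i, l))" for k i
  have f_nonneg: "0 \<le> f k i" if "i < N" for k i
    unfolding f_def using pow_mat_nonneg[OF R nonneg that] by (auto intro: sum_nonneg)
  have f_0: "f 0 i = 1" if "i < N" for i
    unfolding f_def using R that by simp
  have "\<forall>\<^sub>F k in sequentially. \<forall>i<N. f k i < 1 / 2"
  proof (rule eventually_all_less)
    fix i assume "i < N"
    then have "(\<lambda>k. f k i) \<longlonglongrightarrow> 0"
      unfolding f_def using pow_zero by (auto intro: tendsto_null_sum)
    then show "\<forall>\<^sub>F k in sequentially. f k i < 1 / 2"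
      by (rule order_tendstoD(2)) simp
  qed
  then obtain T where T: "\<And>i. i < N \<Longrightarrow> f (Suc T) i < 1 / 2"
    unfolding eventually_sequentially by (meson le_SucI order_refl)
  define u where "u i = (\<Sum>k\<le>T. f k i)" for i
  show ?thesis
  proof
    fix i assume i: "i < N"
    have "u i = f 0 i + (\<Sum>k<T. f (Suc k) i)"
      unfolding u_def by (rule sum.atMost_shift)
    then show "1 \<le> u i" using f_0 f_nonneg i by (simp add: sum_nonneg)
    have "(\<Sum>j<N. R $$ (i, j) * u j) = (\<Sum>k\<le>T. f (Suc k) i)"
      unfolding u_def f_def row_sum_pow_mat_Suc[OF R i]
      by (simp add: sum_distrib_left) (rule sum.swap)
    also have "\<dots> = u i - f 0 i + f (Suc T) i"
      using sum.atMost_shift[of "\<lambda>k. f k i" "Suc T"] unfolding u_def by (simp add: lessThan_Suc_atMost)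
    also have "\<dots> \<le> u i - 1 / 2"
      using f_0[OF i] T[OF i] by simp
    finally show "(\<Sum>j<N. R $$ (i, j) * u j) \<le> u i - 1 / 2" .
  qed
qed

lemma nonneg_mat_contraction_weights:
  fixes R :: "real mat"
  assumes R: "R \<in> carrier_mat N N" and nonneg: "\<And>i j. i < N \<Longrightarrow> j < N \<Longrightarrow> 0 \<le> R $$ (i, j)"
    and pow_zero: "\<And>i j. i < N \<Longrightarrow> j < N \<Longrightarrow> (\<lambda>k. (R ^\<^sub>m k) $$ (i, j)) \<longlonglongrightarrow> 0"
  obtains u \<gamma> where "\<And>i. i < N \<Longrightarrow> 0 < u i" "0 \<le> \<gamma>" "\<gamma> < 1"
    "\<And>i. i < N \<Longrightarrow> (\<Sum>j<N. R $$ (i, j) * u j) \<le> \<gamma> * u i"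
proof -
  obtain u where u_ge_1: "\<And>i. i < N \<Longrightarrow> 1 \<le> u i"
    and u_step: "\<And>i. i < N \<Longrightarrow> (\<Sum>j<N. R $$ (i, j) * u j) \<le> u i - 1 / 2"
    using nonneg_mat_subinvariant_vector[OF R nonneg pow_zero] by blast
  define U where "U = 1 + (\<Sum>i<N. u i)"
  have u_le_U: "u i \<le> U" if "i < N" for i
  proof -
    have "u i \<le> (\<Sum>i<N. u i)"
      using u_ge_1 that by (intro member_le_sum) (auto intro: order_trans[OF zero_le_one])
    then show ?thesis unfolding U_def by simp
  qed
  have U: "1 \<le> U"
    unfolding U_def using u_ge_1 by (auto intro: sum_nonneg order_trans[OF zero_le_one])
  show ?thesis
  proof
    show "0 < u i" if "i < N" for i using u_ge_1[OF that] by simp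
    show "0 \<le> 1 - 1 / (2 * U)" "1 - 1 / (2 * U) < 1" using U by (simp_all add: field_simps)
    show "(\<Sum>j<N. R $$ (i, j) * u j) \<le> (1 - 1 / (2 * U)) * u i" if "i < N" for i
    proof -
      have "u i / (2 * U) \<le> 1 / 2" using u_le_U[OF that] U by (simp add: field_simps)
      then show ?thesis using u_step[OF that] by (simp add: algebra_simps)
    qed
  qed
qed

lemma abs_mat_contraction_weights:
  assumes Q: "Q \<in> carrier_mat N N" and rad: "spectral_radius (abs_mat Q) < 1"
  obtains u \<gamma> where "\<And>i. i < N \<Longrightarrow> 0 < u i" "0 \<le> \<gamma>" "\<gamma> < 1"
    "\<And>i. i < N \<Longrightarrow> (\<Sum>j<N. cmod (Q $$ (i, j)) * u j) \<le> \<gamma> * u i"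
proof -
  define R where "R = map_mat cmod Q"
  have R: "R \<in> carrier_mat N N" using Q unfolding R_def by simp
  have abs_Q: "abs_mat Q = map_mat of_real R"
    unfolding abs_mat_def R_def by (rule eq_matI) auto
  have "(\<lambda>k. (R ^\<^sub>m k) $$ (i, j)) \<longlonglongrightarrow> 0" if "i < N" "j < N" for i j
  proof -
    have "(abs_mat Q ^\<^sub>m k) $$ (i, j) = of_real ((R ^\<^sub>m k) $$ (i, j))" for k
      unfolding abs_Q of_real_hom.mat_hom_pow[OF R, symmetric] using R that by simp
    then show ?thesis
      using pow_mat_entry_tendsto_zero[of "abs_mat Q" N i j] Q rad that
      by (simp add: abs_mat_def tendsto_of_real_iff[where c = 0, simplified])
  qed
  moreover have "0 \<le> R $$ (i, j)" if "i < N" "j < N" for i j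
    using Q that unfolding R_def by simp
  ultimately obtain u \<gamma> where u: "\<And>i. i < N \<Longrightarrow> 0 < u i" "0 \<le> \<gamma>" "\<gamma> < 1"
    and weights: "\<And>i. i < N \<Longrightarrow> (\<Sum>j<N. R $$ (i, j) * u j) \<le> \<gamma> * u i"
    using nonneg_mat_contraction_weights[OF R] by blast
  have "(\<Sum>j<N. R $$ (i, j) * u j) = (\<Sum>j<N. cmod (Q $$ (i, j)) * u j)" if "i < N" for i
    using Q that unfolding R_def by (intro sum.cong) auto
  with u weights show ?thesis by (intro that) auto
qed

locale alternating_contraction =
  fixes n :: nat and TM TF :: "nat \<Rightarrow> nat \<Rightarrow> complex" and u v :: "nat \<Rightarrow> real" and \<gamma> :: real
  assumes TM_weights: "\<And>i. i < n \<Longrightarrow> (\<Sum>j<n. cmod (TM i j) * v j) \<le> \<gamma> * u i"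
    and TF_weights: "\<And>i. i < n \<Longrightarrow> (\<Sum>j<n. cmod (TF i j) * u j) \<le> \<gamma> * v i"
    and u_pos: "\<And>i. i < n \<Longrightarrow> 0 < u i" and v_pos: "\<And>i. i < n \<Longrightarrow> 0 < v i"
    and \<gamma>_nonneg: "0 \<le> \<gamma>" and \<gamma>_less_1: "\<gamma> < 1"
begin

lemma \<gamma>_mult_le: "0 \<le> a \<Longrightarrow> \<gamma> * a \<le> a"
  using \<gamma>_nonneg \<gamma>_less_1 by (simp add: mult_left_le_one_le)

end

locale async_alternating_errors = alternating_contraction n TM TF u v \<gamma>
  for n TM TF u v \<gamma> +
  fixes m :: nat and blk :: "nat \<Rightarrow> nat" and \<Omega> :: "nat \<Rightarrow> nat set"
    and \<delta> :: "nat \<Rightarrow> nat \<Rightarrow> nat \<Rightarrow> nat" and ex ey :: "nat \<Rightarrow> nat \<Rightarrow> complex"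
  assumes blk_less: "\<And>i. i < n \<Longrightarrow> blk i < m"
    and \<Omega>_infinite: "\<And>s. s < m \<Longrightarrow> infinite {k. s \<in> \<Omega> k}"
    and \<delta>_le: "\<And>s q k. s < m \<Longrightarrow> q < m \<Longrightarrow> \<delta> s q k \<le> k"
    and \<delta>_tendsto: "\<And>s q. s < m \<Longrightarrow> q < m \<Longrightarrow> filterlim (\<delta> s q) at_top at_top"
    and ey_eq: "\<And>k i. i < n \<Longrightarrow> ey k i = (\<Sum>j<n. TM i j * ex (\<delta> (blk i) (blk j) k) j)"
    and ex_Suc: "\<And>k i. i < n \<Longrightarrow> ex (Suc k) i =
      (if blk i \<in> \<Omega> k then \<Sum>j<n. TF i j * ey (\<delta> (blk i) (blk j) k) j else ex k i)"
begin

lemma ey_bound: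
  assumes "i < n" "0 \<le> c" "\<And>j. j < n \<Longrightarrow> cmod (ex (\<delta> (blk i) (blk j) k) j) \<le> c * v j"
  shows "cmod (ey k i) \<le> \<gamma> * c * u i"
  unfolding ey_eq[OF \<open>i < n\<close>] by (rule norm_sum_mult_le_weighted) (use assms TM_weights in auto)

lemma ex_Suc_bound:
  assumes "i < n" "blk i \<in> \<Omega> k" "0 \<le> c" "\<And>j. j < n \<Longrightarrow> cmod (ey (\<delta> (blk i) (blk j) k) j) \<le> c * u j"
  shows "cmod (ex (Suc k) i) \<le> \<gamma> * c * v i"
  unfolding ex_Suc[OF \<open>i < n\<close>] using \<open>blk i \<in> \<Omega> k\<close>
  by (simp only: if_True) (rule norm_sum_mult_le_weighted; use assms TF_weights in auto)

lemma ex_Suc_bounded: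
  assumes C: "0 \<le> C" and past: "\<And>k' j. k' \<le> k \<Longrightarrow> j < n \<Longrightarrow> cmod (ex k' j) \<le> C * v j"
    and i: "i < n"
  shows "cmod (ex (Suc k) i) \<le> C * v i"
proof (cases "blk i \<in> \<Omega> k")
  case False
  then show ?thesis using past[of k i] ex_Suc[OF i] i by simp
next
  case True
  have "cmod (ey (\<delta> (blk i) (blk j) k) j) \<le> C * u j" if j: "j < n" for j
  proof -
    let ?d = "\<delta> (blk i) (blk j) k"
    have "?d \<le> k"
      using \<delta>_le blk_less i j by blast
    then have "\<delta> (blk j) (blk l) ?d \<le> k" if "l < n" for l
      using \<delta>_le[OF blk_less[OF j] blk_less[OF that], of ?d] by linarith
    then have "cmod (ey ?d j) \<le> \<gamma> * C * u j"
      using past C j by (intro ey_bound) auto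
    also have "\<dots> \<le> C * u j"
      using \<gamma>_mult_le C u_pos[OF j] by (simp add: mult.assoc)
    finally show ?thesis .
  qed
  then have "cmod (ex (Suc k) i) \<le> \<gamma> * C * v i"
    by (rule ex_Suc_bound[OF i True C])
  also have "\<dots> \<le> C * v i"
    using \<gamma>_mult_le C v_pos[OF i] by (simp add: mult.assoc)
  finally show ?thesis .
qed

lemma ex_bounded:
  obtains C where "0 \<le> C" "\<And>k i. i < n \<Longrightarrow> cmod (ex k i) \<le> C * v i"
proof
  define C where "C = (\<Sum>i<n. cmod (ex 0 i) / v i)"
  show C: "0 \<le> C"
    unfolding C_def using v_pos by (auto intro!: sum_nonneg divide_nonneg_pos)
  show "cmod (ex k i) \<le> C * v i" if "i < n" for k :: nat and i
    using that
  proof (induction k arbitrary: i rule: less_induct)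
    case (less k)
    show ?case
    proof (cases k)
      case 0
      have "cmod (ex 0 i) / v i \<le> C"
        unfolding C_def using less.prems v_pos by (intro member_le_sum) (auto intro: divide_nonneg_pos)
      then show ?thesis using 0 v_pos[OF less.prems] by (simp add: divide_le_eq)
    next
      case (Suc k')
      then show ?thesis
        using ex_Suc_bounded[OF C _ less.prems, of k'] less.IH by simp
    qed
  qed
qed

lemma eventually_delayed:
  assumes "eventually P sequentially"
  shows "\<forall>\<^sub>F k in sequentially. \<forall>s<m. \<forall>q<m. P (\<delta> s q k)"
  using \<delta>_tendsto assms by (intro eventually_all_less) (auto simp: filterlim_iff)

text \<open>Every block is updated again after time K, and an entry does not change between its updates.\<close>

lemma eventually_bound_if_updates_bounded:
  assumes updates: "\<And>k i. K \<le> k \<Longrightarrow> i < n \<Longrightarrow> blk i \<in> \<Omega> k \<Longrightarrow> cmod (ex (Suc k) i) \<le> B i"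
  shows "\<forall>\<^sub>F k in sequentially. \<forall>i<n. cmod (ex k i) \<le> B i"
proof (rule eventually_all_less)
  fix i assume i: "i < n"
  obtain g where g: "K \<le> g" "blk i \<in> \<Omega> g"
    using \<Omega>_infinite[OF blk_less[OF i]] by (auto simp: infinite_nat_iff_unbounded_le)
  have "cmod (ex k i) \<le> B i" if "Suc g \<le> k" for k
    using that
  proof (induction k rule: dec_induct)
    case base
    show ?case using updates g i by simp
  next
    case (step k)
    show ?case
    proof (cases "blk i \<in> \<Omega> k")
      case True
      then show ?thesis using updates[of k i] step.hyps g i by simp
    next
      case False
      then show ?thesis using ex_Suc[OF i] step.IH by simp
    qed
  qed
  then show "\<forall>\<^sub>F k in sequentially. cmod (ex k i) \<le> B i"
    unfolding eventually_sequentially by blast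
qed

lemma ex_contracts:
  assumes c: "0 \<le> c" and bound: "\<forall>\<^sub>F k in sequentially. \<forall>i<n. cmod (ex k i) \<le> c * v i"
  shows "\<forall>\<^sub>F k in sequentially. \<forall>i<n. cmod (ex k i) \<le> \<gamma>\<^sup>2 * c * v i"
proof -
  have \<gamma>c: "0 \<le> \<gamma> * c" using c \<gamma>_nonneg by simp
  have ey_small: "\<forall>\<^sub>F k in sequentially. \<forall>j<n. cmod (ey k j) \<le> \<gamma> * c * u j"
    using eventually_delayed[OF bound]
  proof eventually_elim
    case (elim k)
    show ?case by (intro allI impI ey_bound c elim[rule_format, OF blk_less blk_less])
  qed
  have "\<forall>\<^sub>F k in sequentially. \<forall>i<n. blk i \<in> \<Omega> k \<longrightarrow> cmod (ex (Suc k) i) \<le> \<gamma>\<^sup>2 * c * v i"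
    using eventually_delayed[OF ey_small]
  proof eventually_elim
    case (elim k)
    have "cmod (ex (Suc k) i) \<le> \<gamma> * (\<gamma> * c) * v i" if "i < n" "blk i \<in> \<Omega> k" for i
      by (intro ex_Suc_bound \<gamma>c that elim[rule_format, OF blk_less blk_less])
    then show ?case by (simp add: power2_eq_square mult.assoc)
  qed
  then obtain K where "\<And>k i. K \<le> k \<Longrightarrow> i < n \<Longrightarrow> blk i \<in> \<Omega> k \<Longrightarrow>
      cmod (ex (Suc k) i) \<le> \<gamma>\<^sup>2 * c * v i"
    unfolding eventually_sequentially by blast
  then show ?thesis by (rule eventually_bound_if_updates_bounded)
qed

lemma ex_eventually_geometric:
  obtains C where "0 \<le> C" "\<And>t. \<forall>\<^sub>F k in sequentially. \<forall>i<n. cmod (ex k i) \<le> (\<gamma>\<^sup>2) ^ t * C * v i"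
proof -
  obtain C where C: "0 \<le> C" "\<And>k i. i < n \<Longrightarrow> cmod (ex k i) \<le> C * v i"
    using ex_bounded by blast
  have "\<forall>\<^sub>F k in sequentially. \<forall>i<n. cmod (ex k i) \<le> (\<gamma>\<^sup>2) ^ t * C * v i" for t
  proof (induction t)
    case 0
    show ?case using C by simp
  next
    case (Suc t)
    have "0 \<le> (\<gamma>\<^sup>2) ^ t * C" using C by simp
    from ex_contracts[OF this Suc] show ?case by (simp only: power_Suc mult.assoc)
  qed
  with C(1) show ?thesis by (rule that)
qed

lemma ex_tendsto_zero:
  assumes i: "i < n"
  shows "(\<lambda>k. ex k i) \<longlonglongrightarrow> 0"
proof (rule tendstoI)
  fix \<epsilon> :: real assume "0 < \<epsilon>"
  obtain C where C: "0 \<le> C" and level: "\<And>t. \<forall>\<^sub>F k in sequentially. \<forall>i<n. cmod (ex k i) \<le> (\<gamma>\<^sup>2) ^ t * C * v i"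
    using ex_eventually_geometric by blast
  have "(\<lambda>t. (\<gamma>\<^sup>2) ^ t * C * v i) \<longlonglongrightarrow> 0"
    using \<gamma>_nonneg \<gamma>_less_1
    by (intro tendsto_mult_left_zero LIMSEQ_realpow_zero) (simp_all add: power_less_one_iff)
  then have "\<forall>\<^sub>F t in sequentially. (\<gamma>\<^sup>2) ^ t * C * v i < \<epsilon>"
    using \<open>0 < \<epsilon>\<close> by (rule order_tendstoD(2))
  then obtain t where t: "(\<gamma>\<^sup>2) ^ t * C * v i < \<epsilon>"
    unfolding eventually_sequentially by blast
  from level[of t] show "\<forall>\<^sub>F k in sequentially. dist (ex k i) 0 < \<epsilon>"
  proof eventually_elim
    case (elim k)
    then have "cmod (ex k i) \<le> (\<gamma>\<^sup>2) ^ t * C * v i" using i by blast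
    with t show ?case by simp
  qed
qed

end

text \<open>A common fixed point is a stationary error sequence of the synchronous iteration (one block,
no delays, every step an update), so it tends to zero.\<close>

lemma (in alternating_contraction) common_fixpoint_zero:
  assumes "\<And>i. i < n \<Longrightarrow> z i = (\<Sum>j<n. TM i j * z j)" "\<And>i. i < n \<Longrightarrow> z i = (\<Sum>j<n. TF i j * z j)"
    and i: "i < n"
  shows "z i = 0"
proof -
  interpret async_alternating_errors n TM TF u v \<gamma> 1 "\<lambda>_. 0" "\<lambda>_. {0}" "\<lambda>_ _ k. k" "\<lambda>_. z" "\<lambda>_. z"
  proof
    show "\<And>k i. i < n \<Longrightarrow> z i = (\<Sum>j<n. TM i j * z j)" by (fact assms(1))
    show "z i = (if 0 \<in> {0} then \<Sum>j<n. TF i j * z j else z i)" if "i < n" for k :: nat and i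
      using assms(2)[OF that] by simp
  qed (simp_all add: filterlim_ident)
  show ?thesis using ex_tendsto_zero[OF i] by (simp add: LIMSEQ_const_iff)
qed

lemma antidiagonal_contraction_weights:
  assumes TM: "TM \<in> carrier_mat n n" and TF: "TF \<in> carrier_mat n n"
    and rad: "spectral_radius (abs_mat (four_block_mat (0\<^sub>m n n) TM TF (0\<^sub>m n n))) < 1"
  obtains u v \<gamma> where "alternating_contraction n (\<lambda>i j. TM $$ (i, j)) (\<lambda>i j. TF $$ (i, j)) u v \<gamma>"
proof -
  have "four_block_mat (0\<^sub>m n n) TM TF (0\<^sub>m n n) \<in> carrier_mat (n + n) (n + n)"
    using TM TF by simp
  then obtain w \<gamma> where w: "\<And>i. i < n + n \<Longrightarrow> 0 < w i" "0 \<le> \<gamma>" "\<gamma> < 1"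
    and weights: "\<And>i. i < n + n \<Longrightarrow>
      (\<Sum>j<n + n. cmod (four_block_mat (0\<^sub>m n n) TM TF (0\<^sub>m n n) $$ (i, j)) * w j) \<le> \<gamma> * w i"
    using abs_mat_contraction_weights rad by blast
  have "alternating_contraction n (\<lambda>i j. TM $$ (i, j)) (\<lambda>i j. TF $$ (i, j)) w (\<lambda>i. w (n + i)) \<gamma>"
  proof
    fix i assume i: "i < n"
    show "(\<Sum>j<n. cmod (TM $$ (i, j)) * w (n + j)) \<le> \<gamma> * w i"
      using weights[of i] i TM TF by (simp add: sum_lessThan_add)
    show "(\<Sum>j<n. cmod (TF $$ (i, j)) * w j) \<le> \<gamma> * w (n + i)"
      using weights[of "n + i"] i TM TF by (simp add: sum_lessThan_add)
    show "0 < w i" "0 < w (n + i)" using w(1) i by simp_all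
  qed (use w in simp_all)
  then show ?thesis by (rule that)
qed

lemma mat_inv_inverse:
  assumes B: "B \<in> carrier_mat k k" and inv: "invertible_mat B"
  shows "mat_inv B \<in> carrier_mat k k" "B * mat_inv B = 1\<^sub>m k" "mat_inv B * B = 1\<^sub>m k"
proof -
  obtain C where BC: "B * C = 1\<^sub>m (dim_row B)" and CB: "C * B = 1\<^sub>m (dim_row C)"
    using inv unfolding invertible_mat_def inverts_mat_def by auto
  have "C \<in> carrier_mat k k"
    using arg_cong[OF BC, of dim_col] arg_cong[OF CB, of dim_col] B by auto
  then have "\<exists>C. C \<in> carrier_mat (dim_row B) (dim_row B) \<and> B * C = 1\<^sub>m (dim_row B) \<and> C * B = 1\<^sub>m (dim_row B)"
    using BC CB B by auto
  from someI_ex[OF this] B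
  show "mat_inv B \<in> carrier_mat k k" "B * mat_inv B = 1\<^sub>m k" "mat_inv B * B = 1\<^sub>m k"
    unfolding mat_inv_def by auto
qed

lemma mult_mat_vec_index_sum:
  "A \<in> carrier_mat n n \<Longrightarrow> w \<in> carrier_vec n \<Longrightarrow> i < n \<Longrightarrow> (A *\<^sub>v w) $ i = (\<Sum>j<n. A $$ (i, j) * w $ j)"
  by (simp add: scalar_prod_def lessThan_atLeast0)

lemma splitting_step_error:
  fixes A Mi :: "'a :: comm_ring_1 mat"
  assumes A: "A \<in> carrier_mat n n" and Mi: "Mi \<in> carrier_mat n n"
    and z: "z \<in> carrier_vec n" and xs: "xs \<in> carrier_vec n" and sol: "A *\<^sub>v xs = b"
  shows "z + Mi *\<^sub>v (b - A *\<^sub>v z) - xs = (1\<^sub>m n - Mi * A) *\<^sub>v (z - xs)"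
proof -
  have "A *\<^sub>v (z - xs) = A *\<^sub>v z - b"
    using A z xs sol by (simp add: mult_minus_distrib_mat_vec)
  moreover have "(1\<^sub>m n - Mi * A) *\<^sub>v (z - xs) = (z - xs) - (Mi * A) *\<^sub>v (z - xs)"
    using A Mi z xs by (subst minus_mult_distrib_mat_vec) auto
  ultimately have "(1\<^sub>m n - Mi * A) *\<^sub>v (z - xs) = (z - xs) - Mi *\<^sub>v (A *\<^sub>v z - b)"
    using A Mi z xs by simp
  also have "\<dots> = z + Mi *\<^sub>v (b - A *\<^sub>v z) - xs"
    using A Mi z xs sol by (intro eq_vecI) (auto simp: scalar_prod_def sum_subtractf algebra_simps)
  finally show ?thesis by simp
qed

lemma unique_solution_if_trivial_kernel:
  fixes A :: "'a :: field mat"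
  assumes A: "A \<in> carrier_mat n n" and b: "b \<in> carrier_vec n"
    and kernel: "\<And>z. z \<in> carrier_vec n \<Longrightarrow> A *\<^sub>v z = 0\<^sub>v n \<Longrightarrow> z = 0\<^sub>v n"
  shows "\<exists>xs\<in>carrier_vec n. A *\<^sub>v xs = b \<and> (\<forall>z\<in>carrier_vec n. A *\<^sub>v z = b \<longrightarrow> z = xs)"
proof -
  have "det A \<noteq> 0" using det_0_iff_vec_prod_zero_field[OF A] kernel by blast
  then obtain B where B: "B \<in> carrier_mat n n" "A * B = 1\<^sub>m n"
    using det_non_zero_imp_unit[OF A] unfolding Units_def ring_mat_def by auto
  define xs where "xs = B *\<^sub>v b"
  have xs: "xs \<in> carrier_vec n" unfolding xs_def using B b by simp
  have sol: "A *\<^sub>v xs = b" unfolding xs_def using A B b by (simp flip: assoc_mult_mat_vec)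
  have "z = xs" if z: "z \<in> carrier_vec n" "A *\<^sub>v z = b" for z
  proof -
    have "A *\<^sub>v (z - xs) = 0\<^sub>v n" using A b z xs sol by (simp add: mult_minus_distrib_mat_vec)
    then have diff: "z - xs = 0\<^sub>v n" using kernel z xs by simp
    show ?thesis
    proof (rule eq_vecI)
      fix i assume "i < dim_vec xs"
      then show "z $ i = xs $ i" using arg_cong[OF diff, of "\<lambda>v. v $ i"] z xs by simp
    qed (use z xs in simp)
  qed
  with xs sol show ?thesis by blast
qed

lemma splitting_kernel_trivial:
  assumes contr: "alternating_contraction n (\<lambda>i j. (1\<^sub>m n - Mi * A) $$ (i, j))
      (\<lambda>i j. (1\<^sub>m n - Fi * A) $$ (i, j)) u v \<gamma>"
    and A: "A \<in> carrier_mat n n" and Mi: "Mi \<in> carrier_mat n n" and Fi: "Fi \<in> carrier_mat n n"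
    and z: "z \<in> carrier_vec n" and Az: "A *\<^sub>v z = 0\<^sub>v n"
  shows "z = 0\<^sub>v n"
proof -
  have fixpoint: "z $ i = (\<Sum>j<n. (1\<^sub>m n - C * A) $$ (i, j) * z $ j)"
    if C: "C \<in> carrier_mat n n" and i: "i < n" for C i
  proof -
    have "(1\<^sub>m n - C * A) *\<^sub>v z = z - C *\<^sub>v (A *\<^sub>v z)"
      using A C z by (subst minus_mult_distrib_mat_vec) auto
    also have "\<dots> = z"
      using C z unfolding Az by (intro eq_vecI) auto
    finally have "(1\<^sub>m n - C * A) *\<^sub>v z = z" .
    moreover have "1\<^sub>m n - C * A \<in> carrier_mat n n"
      using A C by (intro minus_carrier_mat mult_carrier_mat)
    ultimately show ?thesis
      using mult_mat_vec_index_sum[of "1\<^sub>m n - C * A" n z i] z i by simp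
  qed
  have "z $ i = 0" if "i < n" for i
    using alternating_contraction.common_fixpoint_zero[where z = "\<lambda>i. z $ i", OF contr fixpoint[OF Mi] fixpoint[OF Fi] that] .
  then show ?thesis
    using z by (intro eq_vecI) auto
qed

lemma exists_interval_containing:
  fixes p :: "nat \<Rightarrow> nat"
  shows "p 0 \<le> i \<Longrightarrow> i < p m \<Longrightarrow> \<exists>s<m. p s \<le> i \<and> i < p (Suc s)"
proof (induction m)
  case (Suc m)
  then show ?case by (cases "i < p m") (auto intro: less_SucI)
qed simp

context
  fixes n m :: nat and p :: "nat \<Rightarrow> nat"
  assumes part: "consecutive_partition n m p"
begin

lemma partition_mono: "s < t \<Longrightarrow> t \<le> m \<Longrightarrow> p (Suc s) \<le> p t"
proof (induction t)
  case (Suc t)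
  have "p t < p (Suc t)"
    using part Suc.prems unfolding consecutive_partition_def by simp
  with Suc show ?case by (cases "s = t") (auto simp: less_Suc_eq)
qed simp

lemma block_of_eqI:
  assumes s: "s < m" and i: "p s \<le> i" "i < p (Suc s)"
  shows "block_of p m i = s"
  unfolding block_of_def
proof (rule the_equality)
  fix s' assume s': "s' < m \<and> p s' \<le> i \<and> i < p (Suc s')"
  show "s' = s"
    using partition_mono[of s' s] partition_mono[of s s'] s s' i
    by (cases s' s rule: linorder_cases) auto
qed (use s i in auto)

lemma block_index_less: "s < m \<Longrightarrow> l < block_size p s \<Longrightarrow> p s + l < n"
  using partition_mono[of s m] part unfolding consecutive_partition_def block_size_def by auto

lemma block_of_block_index: "s < m \<Longrightarrow> l < block_size p s \<Longrightarrow> block_of p m (p s + l) = s"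
  by (rule block_of_eqI) (auto simp: block_size_def)

lemma block_indexE:
  assumes "i < n"
  obtains s l where "s < m" "l < block_size p s" "i = p s + l"
proof -
  obtain s where "s < m" "p s \<le> i" "i < p (Suc s)"
    using exists_interval_containing[of p i m] part assms unfolding consecutive_partition_def by auto
  then show ?thesis using that[of s "i - p s"] by (auto simp: block_size_def)
qed

lemma block_of_less: "i < n \<Longrightarrow> block_of p m i < m"
  by (metis block_indexE block_of_block_index)

lemma sum_blocks: "(\<Sum>j<n. g j) = (\<Sum>q<m. \<Sum>l<block_size p q. g (p q + l))"
proof -
  have "(\<Sum>j<p k. g j) = (\<Sum>q<k. \<Sum>l<block_size p q. g (p q + l))" if "k \<le> m" for k
    using that
  proof (induction k)
    case 0
    then show ?case using part by (simp add: consecutive_partition_def)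
  next
    case (Suc k)
    have "p k < p (Suc k)"
      using part Suc.prems unfolding consecutive_partition_def by simp
    then have "p (Suc k) = p k + block_size p k"
      unfolding block_size_def by simp
    then show ?case using Suc by (simp add: sum_lessThan_add)
  qed
  then show ?thesis using part unfolding consecutive_partition_def by auto
qed

lemma vblock_add: "s < m \<Longrightarrow> v \<in> carrier_vec n \<Longrightarrow> w \<in> carrier_vec n \<Longrightarrow>
    vblock (v + w) p s = vblock v p s + vblock w p s"
  unfolding vblock_def using block_index_less by (intro eq_vecI) auto

lemma vblock_diff: "s < m \<Longrightarrow> v \<in> carrier_vec n \<Longrightarrow> w \<in> carrier_vec n \<Longrightarrow>
    vblock (v - w) p s = vblock v p s - vblock w p s"
  unfolding vblock_def using block_index_less by (intro eq_vecI) auto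

lemma index_eq_if_vblock_eq:
  assumes "i < n" and "vblock v p (block_of p m i) = vblock w p (block_of p m i)"
  shows "v $ i = w $ i"
proof -
  obtain s l where s: "s < m" "l < block_size p s" "i = p s + l"
    using block_indexE[OF assms(1)] .
  then show ?thesis
    using arg_cong[OF assms(2), of "\<lambda>x. x $ l"] block_of_block_index
    unfolding vblock_def by simp
qed

lemma vblock_mult_mat_vec:
  assumes A: "A \<in> carrier_mat n n" and v: "v \<in> carrier_vec n" and s: "s < m"
  shows "vblock (A *\<^sub>v v) p s = block_row_sum A p m s (\<lambda>q. vblock v p q)"
proof (rule eq_vecI)
  fix l assume "l < dim_vec (block_row_sum A p m s (\<lambda>q. vblock v p q))"
  then have l: "l < block_size p s" unfolding block_row_sum_def by simp
  have "vblock (A *\<^sub>v v) p s $ l = (\<Sum>j<n. A $$ (p s + l, j) * v $ j)"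
    using block_index_less[OF s l] l A v unfolding vblock_def by (simp add: scalar_prod_def lessThan_atLeast0)
  also have "\<dots> = (\<Sum>q<m. \<Sum>l'<block_size p q. A $$ (p s + l, p q + l') * v $ (p q + l'))"
    by (rule sum_blocks)
  also have "\<dots> = block_row_sum A p m s (\<lambda>q. vblock v p q) $ l"
    unfolding block_row_sum_def vblock_def mblock_def using l
    by (auto simp: scalar_prod_def lessThan_atLeast0 intro!: sum.cong)
  finally show "vblock (A *\<^sub>v v) p s $ l = block_row_sum A p m s (\<lambda>q. vblock v p q) $ l" .
qed (simp add: block_row_sum_def vblock_def)

lemma vblock_mult_block_diagonal:
  fixes M :: "complex mat"
  assumes M: "M \<in> carrier_mat n n" and bd: "block_diagonal M p m" and v: "v \<in> carrier_vec n" and s: "s < m"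
  shows "vblock (M *\<^sub>v v) p s = mblock M p s s *\<^sub>v vblock v p s"
proof (rule eq_vecI)
  fix l assume "l < dim_vec (mblock M p s s *\<^sub>v vblock v p s)"
  then have l: "l < block_size p s" unfolding mblock_def by simp
  have off_diagonal: "(mblock M p s q *\<^sub>v vblock v p q) $ l = 0" if q: "q < m" "q \<noteq> s" for q
  proof -
    have "M $$ (p s + l, p q + l') = 0" if l': "l' < block_size p q" for l'
      using bd M block_index_less[OF s l] block_index_less[OF q(1) l']
        block_of_block_index[OF s l] block_of_block_index[OF q(1) l'] q(2)
      unfolding block_diagonal_def by auto
    then show ?thesis using l by (auto simp: mblock_def vblock_def scalar_prod_def intro!: sum.neutral)
  qed
  have "vblock (M *\<^sub>v v) p s $ l = (\<Sum>q<m. (mblock M p s q *\<^sub>v vblock v p q) $ l)"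
    unfolding vblock_mult_mat_vec[OF M v s] block_row_sum_def using l by simp
  also have "\<dots> = (mblock M p s s *\<^sub>v vblock v p s) $ l"
    using off_diagonal s by (subst sum.remove[of _ s]) (auto intro!: sum.neutral)
  finally show "vblock (M *\<^sub>v v) p s $ l = (mblock M p s s *\<^sub>v vblock v p s) $ l" .
qed (simp add: mblock_def vblock_def)

lemma vblock_mat_inv_block_diagonal:
  fixes M :: "complex mat"
  assumes M: "M \<in> carrier_mat n n" "invertible_mat M" and bd: "block_diagonal M p m"
    and Ms: "invertible_mat (mblock M p s s)" and w: "w \<in> carrier_vec n" and s: "s < m"
  shows "vblock (mat_inv M *\<^sub>v w) p s = mat_inv (mblock M p s s) *\<^sub>v vblock w p s"
proof -
  have Ms_carrier: "mblock M p s s \<in> carrier_mat (block_size p s) (block_size p s)"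
    unfolding mblock_def by simp
  note M_inv = mat_inv_inverse[OF M] and Ms_inv = mat_inv_inverse[OF Ms_carrier Ms]
  define v where "v = mat_inv M *\<^sub>v w"
  have v: "v \<in> carrier_vec n" unfolding v_def using M_inv(1) w by simp
  have vs: "vblock v p s \<in> carrier_vec (block_size p s)" unfolding vblock_def by simp
  have "M *\<^sub>v v = w"
    unfolding v_def using M_inv w M by (simp flip: assoc_mult_mat_vec)
  then have Mv: "mblock M p s s *\<^sub>v vblock v p s = vblock w p s"
    using vblock_mult_block_diagonal[OF M(1) bd v s] by simp
  have "vblock v p s = (mat_inv (mblock M p s s) * mblock M p s s) *\<^sub>v vblock v p s"
    using Ms_inv(3) vs by simp
  also have "\<dots> = mat_inv (mblock M p s s) *\<^sub>v vblock w p s"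
    using Ms_inv(1) Ms_carrier vs Mv by simp
  finally show ?thesis unfolding v_def .
qed

end

text \<open>The vector z with z_j = X s (block_of p m j) $ j collects the delayed iterates seen by block s;
by block diagonality of M, the block update of block s is block s of z + M^-1 (b - A z).\<close>

lemma block_update_error:
  fixes A M :: "complex mat" and X :: "nat \<Rightarrow> nat \<Rightarrow> complex vec"
  assumes part: "consecutive_partition n m p"
    and A: "A \<in> carrier_mat n n" and M: "M \<in> carrier_mat n n" "invertible_mat M"
    and bd: "block_diagonal M p m" and Ms: "\<forall>s<m. invertible_mat (mblock M p s s)"
    and b: "b \<in> carrier_vec n" and xs: "xs \<in> carrier_vec n" "A *\<^sub>v xs = b"
    and X: "\<And>s q. X s q \<in> carrier_vec n" and i: "i < n"
    and update: "vblock w p (block_of p m i) = vblock (X (block_of p m i) (block_of p m i)) p (block_of p m i) +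
      mat_inv (mblock M p (block_of p m i) (block_of p m i)) *\<^sub>v
        (vblock b p (block_of p m i) - block_row_sum A p m (block_of p m i) (\<lambda>q. vblock (X (block_of p m i) q) p q))"
  shows "w $ i - xs $ i =
    (\<Sum>j<n. (1\<^sub>m n - mat_inv M * A) $$ (i, j) * (X (block_of p m i) (block_of p m j) $ j - xs $ j))"
proof -
  define s where "s = block_of p m i"
  have s: "s < m" unfolding s_def using block_of_less[OF part i] .
  define z where "z = vec n (\<lambda>j. X s (block_of p m j) $ j)"
  have z: "z \<in> carrier_vec n" unfolding z_def by simp
  have M_inv: "mat_inv M \<in> carrier_mat n n" using mat_inv_inverse(1)[OF M] .
  have z_blocks: "vblock z p q = vblock (X s q) p q" if "q < m" for q
    unfolding z_def vblock_def using X block_index_less[OF part that] block_of_block_index[OF part that]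
    by (intro eq_vecI) auto
  have "block_row_sum A p m s (\<lambda>q. vblock (X s q) p q) = vblock (A *\<^sub>v z) p s"
    unfolding vblock_mult_mat_vec[OF part A z s] block_row_sum_def by (simp add: z_blocks)
  then have "vblock w p s = vblock z p s + vblock (mat_inv M *\<^sub>v (b - A *\<^sub>v z)) p s"
    using update A b z s Ms
    by (simp add: s_def z_blocks vblock_diff[OF part] vblock_mat_inv_block_diagonal[OF part M bd])
  also have "\<dots> = vblock (z + mat_inv M *\<^sub>v (b - A *\<^sub>v z)) p s"
    using A b z M_inv s by (simp add: vblock_add[OF part])
  finally have "w $ i = (z + mat_inv M *\<^sub>v (b - A *\<^sub>v z)) $ i"
    using index_eq_if_vblock_eq[OF part i] unfolding s_def by blast
  also have "\<dots> = (z + mat_inv M *\<^sub>v (b - A *\<^sub>v z) - xs) $ i + xs $ i"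
    using A b z xs M_inv i by simp
  also have "\<dots> = ((1\<^sub>m n - mat_inv M * A) *\<^sub>v (z - xs)) $ i + xs $ i"
    unfolding splitting_step_error[OF A M_inv z xs] ..
  also have "\<dots> = (\<Sum>j<n. (1\<^sub>m n - mat_inv M * A) $$ (i, j) * (z - xs) $ j) + xs $ i"
    using A M_inv z xs i by (subst mult_mat_vec_index_sum) auto
  finally show ?thesis
    using z xs by (simp add: z_def s_def)
qed

lemma block_update_error_if:
  fixes A M :: "complex mat" and X :: "nat \<Rightarrow> nat \<Rightarrow> complex vec"
  assumes part: "consecutive_partition n m p"
    and A: "A \<in> carrier_mat n n" and M: "M \<in> carrier_mat n n" "invertible_mat M"
    and bd: "block_diagonal M p m" and Ms: "\<forall>s<m. invertible_mat (mblock M p s s)"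
    and b: "b \<in> carrier_vec n" and xs: "xs \<in> carrier_vec n" "A *\<^sub>v xs = b"
    and X: "\<And>s q. X s q \<in> carrier_vec n" and i: "i < n"
    and update: "vblock w p (block_of p m i) = (if block_of p m i \<in> U then
      vblock (X (block_of p m i) (block_of p m i)) p (block_of p m i) +
      mat_inv (mblock M p (block_of p m i) (block_of p m i)) *\<^sub>v
        (vblock b p (block_of p m i) - block_row_sum A p m (block_of p m i) (\<lambda>q. vblock (X (block_of p m i) q) p q))
      else vblock w' p (block_of p m i))"
  shows "w $ i - xs $ i = (if block_of p m i \<in> U then
    \<Sum>j<n. (1\<^sub>m n - mat_inv M * A) $$ (i, j) * (X (block_of p m i) (block_of p m j) $ j - xs $ j)
    else w' $ i - xs $ i)"
proof (cases "block_of p m i \<in> U")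
  case True
  with update show ?thesis
    using block_update_error[OF part A M bd Ms b xs X i] by simp
next
  case False
  with update have "w $ i = w' $ i"
    using index_eq_if_vblock_eq[OF part i] by simp
  with False show ?thesis by simp
qed

theorem theorem3:
  fixes n m :: nat
    and p :: "nat \<Rightarrow> nat"
    and A M F :: "complex mat"
    and b :: "complex vec"
    and \<Omega> :: "nat \<Rightarrow> nat set"
    and \<delta> :: "nat \<Rightarrow> nat \<Rightarrow> nat \<Rightarrow> nat"
    and x y :: "nat \<Rightarrow> complex vec"
  assumes part: "consecutive_partition n m p"
    and A: "A \<in> carrier_mat n n"
    and b: "b \<in> carrier_vec n"
    and M: "M \<in> carrier_mat n n" and M_inv: "invertible_mat M"
    and F: "F \<in> carrier_mat n n" and F_inv: "invertible_mat F"
    and M_bd: "block_diagonal M p m" and F_bd: "block_diagonal F p m"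
    and M_blocks: "\<forall>s<m. invertible_mat (mblock M p s s)"
    and F_blocks: "\<forall>s<m. invertible_mat (mblock F p s s)"
    and rho: "spectral_radius (abs_mat
                (four_block_mat (0\<^sub>m n n) (1\<^sub>m n - mat_inv M * A)
                                (1\<^sub>m n - mat_inv F * A) (0\<^sub>m n n))) < 1"
    and Omega_sub: "\<forall>k. \<Omega> k \<subseteq> {..<m}"
    and Omega_inf: "\<forall>s<m. infinite {k. s \<in> \<Omega> k}"
    and delay_le: "\<forall>s<m. \<forall>q<m. \<forall>k. \<delta> s q k \<le> k"
    and delay_lim: "\<forall>s<m. \<forall>q<m. filterlim (\<delta> s q) at_top at_top"
    and x_dim: "\<forall>k. x k \<in> carrier_vec n"
    and y_dim: "\<forall>k. y k \<in> carrier_vec n"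
    and y_def: "\<forall>k. \<forall>s<m. vblock (y k) p s =
                  vblock (x (\<delta> s s k)) p s +
                  mat_inv (mblock M p s s) *\<^sub>v
                    (vblock b p s - block_row_sum A p m s (\<lambda>q. vblock (x (\<delta> s q k)) p q))"
    and x_def: "\<forall>k. \<forall>s<m. vblock (x (Suc k)) p s =
                  (if s \<in> \<Omega> k then
                     vblock (y (\<delta> s s k)) p s +
                     mat_inv (mblock F p s s) *\<^sub>v
                       (vblock b p s - block_row_sum A p m s (\<lambda>q. vblock (y (\<delta> s q k)) p q))
                   else vblock (x k) p s)"
  shows "\<exists>xs \<in> carrier_vec n. A *\<^sub>v xs = b \<and>
           (\<forall>z \<in> carrier_vec n. A *\<^sub>v z = b \<longrightarrow> z = xs) \<and>
           (\<forall>i<n. (\<lambda>k. x k $ i) \<longlonglongrightarrow> xs $ i)"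
proof -
  define TM TF where "TM = 1\<^sub>m n - mat_inv M * A" and "TF = 1\<^sub>m n - mat_inv F * A"
  have inv: "mat_inv M \<in> carrier_mat n n" "mat_inv F \<in> carrier_mat n n"
    using mat_inv_inverse(1) M M_inv F F_inv by auto
  have "TM \<in> carrier_mat n n" "TF \<in> carrier_mat n n"
    unfolding TM_def TF_def using A inv by auto
  then obtain u v \<gamma> where contr: "alternating_contraction n (\<lambda>i j. TM $$ (i, j)) (\<lambda>i j. TF $$ (i, j)) u v \<gamma>"
    using antidiagonal_contraction_weights rho unfolding TM_def TF_def by blast
  obtain xs where xs: "xs \<in> carrier_vec n" "A *\<^sub>v xs = b"
    and unique: "\<forall>z\<in>carrier_vec n. A *\<^sub>v z = b \<longrightarrow> z = xs"
    using unique_solution_if_trivial_kernel[OF A b] splitting_kernel_trivial[OF contr[unfolded TM_def TF_def] A inv]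
    by blast
  interpret async_alternating_errors n "\<lambda>i j. TM $$ (i, j)" "\<lambda>i j. TF $$ (i, j)" u v \<gamma> m
    "block_of p m" \<Omega> \<delta> "\<lambda>k i. x k $ i - xs $ i" "\<lambda>k i. y k $ i - xs $ i"
  proof (intro async_alternating_errors.intro contr async_alternating_errors_axioms.intro)
    fix k i assume i: "i < n"
    show "y k $ i - xs $ i =
        (\<Sum>j<n. TM $$ (i, j) * (x (\<delta> (block_of p m i) (block_of p m j) k) $ j - xs $ j))"
      unfolding TM_def by (rule block_update_error[OF part A M M_inv M_bd M_blocks b xs _ i])
        (use x_dim y_def block_of_less[OF part i] in auto)
    show "x (Suc k) $ i - xs $ i = (if block_of p m i \<in> \<Omega> k
        then \<Sum>j<n. TF $$ (i, j) * (y (\<delta> (block_of p m i) (block_of p m j) k) $ j - xs $ j)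
        else x k $ i - xs $ i)"
      unfolding TF_def by (rule block_update_error_if[OF part A F F_inv F_bd F_blocks b xs _ i])
        (use y_dim x_def block_of_less[OF part i] in auto)
  qed (use block_of_less[OF part] Omega_inf delay_le delay_lim in blast)+
  have "(\<lambda>k. x k $ i) \<longlonglongrightarrow> xs $ i" if "i < n" for i
    using ex_tendsto_zero[OF that] by (simp only: LIM_zero_iff)
  with xs unique show ?thesis by blast
qed

end
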